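(* Let $L\subseteq Q$ be a dense extension of Lie algebras such that $Q$ is a multiplicatively semiprime algebra of quotients of $L$. Then for every essential ideal $I$ of $L$, the extension $I\subseteq Q$ is dense.
   Context: Lie algebras over a commutative unital ring $\Phi$. $\mathrm{ad}_x(y)=[x,y]$; $M(Q)$ is the subalgebra of $\mathrm{End}_\Phi(Q)$ generated by the identity and all $\mathrm{ad}_x$, $x\in Q$. For a Lie subalgebra $S\subseteq Q$, the extension $S\subseteq Q$ is dense if the only $\mu\in M(Q)$ with $\mu(S)=0$ is $\mu=0$. A Lie algebra is semiprime if $[I,I]\ne0$ for each nonzero ideal $I$; $Q$ is multiplicatively semiprime if $Q$ and $M(Q)$ are semiprime. An ideal $I$ of $L$ is essential if it meets every nonzero ideal of $L$ nontrivially. $\mathrm{Ann}_L(X)=\{a\in L:[a,X]=0\}$. $Q$ is an algebra of quotients of $L$ if for every nonzero $q\in Q$ there is an ideal $J$ of $L$ with $\mathrm{Ann}_L(J)=0$ and $0\ne[J,q]\subseteq L$. *)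

theory Defs
  imports Main "HOL.Modules"
begin

text \<open>Lie algebras over a commutative unital ring. The scalar ring is a type
 'r :: comm_ring_1, the ambient Lie algebra Q is the whole type 'q with scalar
 multiplication scale and bracket br.\<close>

definition lie_algebra :: "('r::comm_ring_1 \<Rightarrow> 'q::ab_group_add \<Rightarrow> 'q) \<Rightarrow> ('q \<Rightarrow> 'q \<Rightarrow> 'q) \<Rightarrow> bool" where
  "lie_algebra scale br \<longleftrightarrow>
     module scale \<and>
     (\<forall>x y z. br (x + y) z = br x z + br y z) \<and>
     (\<forall>x y z. br x (y + z) = br x y + br x z) \<and>
     (\<forall>c x y. br (scale c x) y = scale c (br x y)) \<and>
     (\<forall>c x y. br x (scale c y) = scale c (br x y)) \<and>
     (\<forall>x. br x x = 0) \<and>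
     (\<forall>x y z. br x (br y z) + br y (br z x) + br z (br x y) = 0)"

definition submodule :: "('r::comm_ring_1 \<Rightarrow> 'q::ab_group_add \<Rightarrow> 'q) \<Rightarrow> 'q set \<Rightarrow> bool" where
  "submodule scale S \<longleftrightarrow> 0 \<in> S \<and> (\<forall>x\<in>S. \<forall>y\<in>S. x + y \<in> S) \<and> (\<forall>c. \<forall>x\<in>S. scale c x \<in> S)"

definition lie_subalgebra :: "('r::comm_ring_1 \<Rightarrow> 'q::ab_group_add \<Rightarrow> 'q) \<Rightarrow> ('q \<Rightarrow> 'q \<Rightarrow> 'q) \<Rightarrow> 'q set \<Rightarrow> bool" where
  "lie_subalgebra scale br S \<longleftrightarrow> submodule scale S \<and> (\<forall>x\<in>S. \<forall>y\<in>S. br x y \<in> S)"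

definition lie_ideal :: "('r::comm_ring_1 \<Rightarrow> 'q::ab_group_add \<Rightarrow> 'q) \<Rightarrow> ('q \<Rightarrow> 'q \<Rightarrow> 'q) \<Rightarrow> 'q set \<Rightarrow> 'q set \<Rightarrow> bool" where
  "lie_ideal scale br L I \<longleftrightarrow> I \<subseteq> L \<and> submodule scale I \<and> (\<forall>a\<in>I. \<forall>x\<in>L. br a x \<in> I)"

definition lie_semiprime :: "('r::comm_ring_1 \<Rightarrow> 'q::ab_group_add \<Rightarrow> 'q) \<Rightarrow> ('q \<Rightarrow> 'q \<Rightarrow> 'q) \<Rightarrow> bool" where
  "lie_semiprime scale br \<longleftrightarrow>
     (\<forall>I. lie_ideal scale br UNIV I \<and> I \<noteq> {0} \<longrightarrow> (\<exists>a\<in>I. \<exists>b\<in>I. br a b \<noteq> 0))"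

inductive_set mult_alg :: "('r::comm_ring_1 \<Rightarrow> 'q::ab_group_add \<Rightarrow> 'q) \<Rightarrow> ('q \<Rightarrow> 'q \<Rightarrow> 'q) \<Rightarrow> ('q \<Rightarrow> 'q) set"
  for scale br where
  id_in: "id \<in> mult_alg scale br"
| ad_in: "br x \<in> mult_alg scale br"
| add_in: "f \<in> mult_alg scale br \<Longrightarrow> g \<in> mult_alg scale br \<Longrightarrow> (\<lambda>v. f v + g v) \<in> mult_alg scale br"
| scale_in: "f \<in> mult_alg scale br \<Longrightarrow> (\<lambda>v. scale c (f v)) \<in> mult_alg scale br"
| comp_in: "f \<in> mult_alg scale br \<Longrightarrow> g \<in> mult_alg scale br \<Longrightarrow> f \<circ> g \<in> mult_alg scale br"

definition mult_ideal :: "('r::comm_ring_1 \<Rightarrow> 'q::ab_group_add \<Rightarrow> 'q) \<Rightarrow> ('q \<Rightarrow> 'q \<Rightarrow> 'q) \<Rightarrow> ('q \<Rightarrow> 'q) set \<Rightarrow> bool" where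
  "mult_ideal scale br I \<longleftrightarrow> I \<subseteq> mult_alg scale br \<and> (\<lambda>v. 0) \<in> I \<and>
     (\<forall>f\<in>I. \<forall>g\<in>I. (\<lambda>v. f v + g v) \<in> I) \<and> (\<forall>c. \<forall>f\<in>I. (\<lambda>v. scale c (f v)) \<in> I) \<and>
     (\<forall>f\<in>I. \<forall>m\<in>mult_alg scale br. m \<circ> f \<in> I \<and> f \<circ> m \<in> I)"

definition mult_alg_semiprime :: "('r::comm_ring_1 \<Rightarrow> 'q::ab_group_add \<Rightarrow> 'q) \<Rightarrow> ('q \<Rightarrow> 'q \<Rightarrow> 'q) \<Rightarrow> bool" where
  "mult_alg_semiprime scale br \<longleftrightarrow>
     (\<forall>I. mult_ideal scale br I \<and> I \<noteq> {\<lambda>v. 0} \<longrightarrow> (\<exists>f\<in>I. \<exists>g\<in>I. f \<circ> g \<noteq> (\<lambda>v. 0)))"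

definition mult_semiprime :: "('r::comm_ring_1 \<Rightarrow> 'q::ab_group_add \<Rightarrow> 'q) \<Rightarrow> ('q \<Rightarrow> 'q \<Rightarrow> 'q) \<Rightarrow> bool" where
  "mult_semiprime scale br \<longleftrightarrow> lie_semiprime scale br \<and> mult_alg_semiprime scale br"

definition dense_ext :: "('r::comm_ring_1 \<Rightarrow> 'q::ab_group_add \<Rightarrow> 'q) \<Rightarrow> ('q \<Rightarrow> 'q \<Rightarrow> 'q) \<Rightarrow> 'q set \<Rightarrow> bool" where
  "dense_ext scale br S \<longleftrightarrow>
     (\<forall>\<mu>\<in>mult_alg scale br. (\<forall>s\<in>S. \<mu> s = 0) \<longrightarrow> \<mu> = (\<lambda>v. 0))"

definition essential_ideal :: "('r::comm_ring_1 \<Rightarrow> 'q::ab_group_add \<Rightarrow> 'q) \<Rightarrow> ('q \<Rightarrow> 'q \<Rightarrow> 'q) \<Rightarrow> 'q set \<Rightarrow> 'q set \<Rightarrow> bool" where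
  "essential_ideal scale br L I \<longleftrightarrow> lie_ideal scale br L I \<and>
     (\<forall>J. lie_ideal scale br L J \<and> J \<noteq> {0} \<longrightarrow> I \<inter> J \<noteq> {0})"

definition Ann :: "('q::ab_group_add \<Rightarrow> 'q \<Rightarrow> 'q) \<Rightarrow> 'q set \<Rightarrow> 'q set \<Rightarrow> 'q set" where
  "Ann br L X = {a \<in> L. \<forall>x\<in>X. br a x = 0}"

definition algebra_of_quotients :: "('r::comm_ring_1 \<Rightarrow> 'q::ab_group_add \<Rightarrow> 'q) \<Rightarrow> ('q \<Rightarrow> 'q \<Rightarrow> 'q) \<Rightarrow> 'q set \<Rightarrow> bool" where
  "algebra_of_quotients scale br L \<longleftrightarrow>
     (\<forall>q. q \<noteq> 0 \<longrightarrow> (\<exists>J. lie_ideal scale br L J \<and> Ann br L J = {0} \<and>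
          (\<forall>j\<in>J. br j q \<in> L) \<and> (\<exists>j\<in>J. br j q \<noteq> 0)))"

end

theory Submission
  imports Defs
begin

text \<open>Let \<open>N\<close> be the annihilator of \<open>I\<close> in \<open>M(Q)\<close>. Since \<open>[i, L] \<subseteq> I\<close> for \<open>i \<in> I\<close>,
  density of \<open>L\<close> gives \<open>N \<circ> ad\<^sub>i = 0\<close>, and hence \<open>N\<close> is a two-sided ideal of \<open>M(Q)\<close>.
  The elements of \<open>N\<close> whose range is killed by \<open>N\<close> form an ideal of square zero, so they
  vanish as \<open>M(Q)\<close> is semiprime. For \<open>\<mu> \<in> N\<close> and \<open>i \<in> I\<close> this applies to \<open>ad\<^sub>i \<circ> \<mu>\<close>, so
  \<open>[I, \<mu>(Q)] = 0\<close>. Applied to \<open>ad\<^sub>k\<close> with \<open>k \<in> I \<inter> Ann\<^sub>L(I)\<close> it makes \<open>k\<close> central, hence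
  zero as \<open>Q\<close> is semiprime; so \<open>Ann\<^sub>L(I) = 0\<close> by essentiality, and since \<open>Q\<close> is an algebra
  of quotients of \<open>L\<close>, also \<open>Ann\<^sub>Q(I) = 0\<close>. Therefore \<open>\<mu> = 0\<close>.\<close>

locale lie_alg =
  fixes scale :: "'r::comm_ring_1 \<Rightarrow> 'q::ab_group_add \<Rightarrow> 'q"
    and br :: "'q \<Rightarrow> 'q \<Rightarrow> 'q"
  assumes lie_algebra: "lie_algebra scale br"
begin

sublocale module scale
  using lie_algebra by (simp add: lie_algebra_def)

lemma br_add_left: "br (x + y) z = br x z + br y z"
  and br_add_right: "br x (y + z) = br x y + br x z"
  and br_scale_left: "br (scale c x) y = scale c (br x y)"
  and br_scale_right: "br x (scale c y) = scale c (br x y)"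
  and br_self: "br x x = 0"
  and jacobi: "br x (br y z) + br y (br z x) + br z (br x y) = 0"
  using lie_algebra by (simp_all add: lie_algebra_def)

lemma br_zero_left [simp]: "br 0 x = 0"
  using br_add_left[of 0 0 x] by simp

lemma br_zero_right [simp]: "br x 0 = 0"
  using br_add_right[of x 0 0] by simp

lemma br_antisym: "br x y = - br y x"
proof -
  have "br (x + y) (x + y) = br x x + br y x + (br x y + br y y)"
    by (simp only: br_add_left br_add_right)
  then have "br y x + br x y = 0"
    by (simp add: br_self)
  then show ?thesis
    by (metis eq_neg_iff_add_eq_0 add.commute)
qed

lemma br_minus_left: "br (- x) y = - br x y"
  using br_add_left[of x "- x" y] by (simp add: eq_neg_iff_add_eq_0 add.commute)

lemma br_minus_right: "br x (- y) = - br x y"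
  using br_antisym[of x "- y"] br_antisym[of y x] br_minus_left[of y x] by simp

lemma mult_alg_linear:
  assumes "f \<in> mult_alg scale br"
  shows "f (x + y) = f x + f y" and "f (scale c x) = scale c (f x)"
proof -
  from assms have "\<forall>x y c. f (x + y) = f x + f y \<and> f (scale c x) = scale c (f x)"
    by induction
      (simp_all add: br_add_right br_scale_right scale_right_distrib scale_left_commute
        algebra_simps)
  then show "f (x + y) = f x + f y" and "f (scale c x) = scale c (f x)"
    by blast+
qed

lemmas mult_alg_add = mult_alg_linear(1) and mult_alg_scale = mult_alg_linear(2)

lemma mult_alg_zero: "f \<in> mult_alg scale br \<Longrightarrow> f 0 = 0"
  using mult_alg_add[of f 0 0] by simp

lemma mult_alg_minus: "f \<in> mult_alg scale br \<Longrightarrow> f (- x) = - f x"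
  using mult_alg_add[of f x "- x"] mult_alg_zero[of f] by (simp add: eq_neg_iff_add_eq_0 add.commute)

lemma zero_fun_in_mult_alg: "(\<lambda>v. 0) \<in> mult_alg scale br"
proof -
  have "(\<lambda>v. scale 0 (id v)) \<in> mult_alg scale br"
    by (rule mult_alg.scale_in[OF mult_alg.id_in])
  then show ?thesis
    by simp
qed

definition mult_ann :: "'q set \<Rightarrow> ('q \<Rightarrow> 'q) set" where
  "mult_ann S = {f \<in> mult_alg scale br. \<forall>s\<in>S. f s = 0}"

lemma mult_ideal_range_annihilated:
  assumes N: "mult_ideal scale br N"
  shows "mult_ideal scale br {f \<in> N. \<forall>q. \<forall>g\<in>N. g (f q) = 0}"
proof -
  have NM: "N \<subseteq> mult_alg scale br"
    using N by (simp add: mult_ideal_def)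
  have "g (f q + f' q) = 0" if "f \<in> N" "f' \<in> N" "g \<in> N"
    and "\<forall>q. \<forall>g\<in>N. g (f q) = 0" "\<forall>q. \<forall>g\<in>N. g (f' q) = 0" for f f' g q
    using that NM by (metis add.right_neutral mult_alg_add subsetD)
  moreover have "g (scale c (f q)) = 0" if "f \<in> N" "g \<in> N" "\<forall>q. \<forall>g\<in>N. g (f q) = 0"
    for f g c q
    using that NM by (metis scale_zero_right mult_alg_scale subsetD)
  moreover have "g (m (f q)) = 0"
    if "m \<in> mult_alg scale br" "g \<in> N" "\<forall>q. \<forall>g\<in>N. g (f q) = 0" for f g m q
    using that N unfolding mult_ideal_def by (metis comp_apply)
  ultimately show ?thesis
    using N NM mult_alg_zero unfolding mult_ideal_def by (auto simp: subset_iff)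
qed

lemma mult_ideal_annihilated_element_eq_zero:
  assumes semiprime: "mult_alg_semiprime scale br"
    and N: "mult_ideal scale br N" and f: "f \<in> N" and ann: "\<forall>q. \<forall>g\<in>N. g (f q) = 0"
  shows "f = (\<lambda>v. 0)"
proof -
  define R where "R = {f \<in> N. \<forall>q. \<forall>g\<in>N. g (f q) = 0}"
  have "mult_ideal scale br R"
    unfolding R_def using N by (rule mult_ideal_range_annihilated)
  moreover have "g \<circ> h = (\<lambda>v. 0)" if "g \<in> R" "h \<in> R" for g h
    using that by (auto simp: R_def)
  ultimately have "R = {\<lambda>v. 0}"
    using semiprime unfolding mult_alg_semiprime_def by blast
  moreover have "f \<in> R"
    using f ann by (simp add: R_def)
  ultimately show ?thesis
    by blast
qed

lemma mult_ann_add: "f \<in> mult_ann S \<Longrightarrow> g \<in> mult_ann S \<Longrightarrow> (\<lambda>v. f v + g v) \<in> mult_ann S"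
  by (simp add: mult_ann_def mult_alg.add_in)

lemma mult_ann_scale: "f \<in> mult_ann S \<Longrightarrow> (\<lambda>v. scale c (f v)) \<in> mult_ann S"
  by (simp add: mult_ann_def mult_alg.scale_in)

lemma mult_ann_comp_ad_eq_zero:
  assumes dense: "dense_ext scale br L" and I: "lie_ideal scale br L I"
    and f: "f \<in> mult_ann I" and i: "i \<in> I"
  shows "f \<circ> br i = (\<lambda>v. 0)"
proof -
  have "f \<circ> br i \<in> mult_alg scale br"
    using f by (auto simp: mult_ann_def intro: mult_alg.comp_in mult_alg.ad_in)
  moreover have "\<forall>x\<in>L. f (br i x) = 0"
    using f i I by (auto simp: mult_ann_def lie_ideal_def)
  ultimately show ?thesis
    using dense by (simp add: dense_ext_def)
qed

lemma mult_ann_comp_right: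
  assumes dense: "dense_ext scale br L" and I: "lie_ideal scale br L I"
    and m: "m \<in> mult_alg scale br"
  shows "f \<in> mult_ann I \<Longrightarrow> f \<circ> m \<in> mult_ann I"
  using m
proof (induction arbitrary: f)
  case id_in
  then show ?case
    by simp
next
  case (ad_in x)
  have "f \<circ> br x \<in> mult_alg scale br"
    using ad_in by (auto simp: mult_ann_def intro: mult_alg.comp_in mult_alg.ad_in)
  moreover have "f (br x i) = - (f \<circ> br i) x" if "i \<in> I" for i
    using ad_in mult_alg_minus br_antisym[of x i] by (simp add: mult_ann_def)
  moreover have "(f \<circ> br i) x = 0" if "i \<in> I" for i
    using mult_ann_comp_ad_eq_zero[OF dense I ad_in that] by simp
  ultimately show ?case
    unfolding mult_ann_def by force
next
  case (add_in g h)
  have "f \<circ> (\<lambda>v. g v + h v) = (\<lambda>v. (f \<circ> g) v + (f \<circ> h) v)"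
    using add_in.prems by (simp add: fun_eq_iff mult_ann_def mult_alg_add)
  then show ?case
    using add_in by (simp add: mult_ann_add)
next
  case (scale_in g c)
  have "f \<circ> (\<lambda>v. scale c (g v)) = (\<lambda>v. scale c ((f \<circ> g) v))"
    using scale_in.prems by (simp add: fun_eq_iff mult_ann_def mult_alg_scale)
  then show ?case
    using scale_in by (simp add: mult_ann_scale)
next
  case (comp_in g h)
  then show ?case
    by (metis comp_assoc)
qed

lemma mult_ideal_mult_ann:
  assumes "dense_ext scale br L" and "lie_ideal scale br L I"
  shows "mult_ideal scale br (mult_ann I)"
  using mult_ann_comp_right[OF assms] mult_ann_add mult_ann_scale zero_fun_in_mult_alg
  by (auto simp: mult_ideal_def mult_ann_def mult_alg_zero intro: mult_alg.comp_in)

lemma ad_comp_eq_zero_if_vanishes_on_ideal: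
  assumes semiprime: "mult_alg_semiprime scale br"
    and dense: "dense_ext scale br L" and I: "lie_ideal scale br L I"
    and i: "i \<in> I" and g: "g \<in> mult_alg scale br" and vanish: "\<forall>s\<in>I. br i (g s) = 0"
  shows "br i \<circ> g = (\<lambda>v. 0)"
proof (rule mult_ideal_annihilated_element_eq_zero[OF semiprime mult_ideal_mult_ann[OF dense I]])
  show "br i \<circ> g \<in> mult_ann I"
    using g vanish by (auto simp: mult_ann_def intro: mult_alg.comp_in mult_alg.ad_in)
  show "\<forall>q. \<forall>f\<in>mult_ann I. f ((br i \<circ> g) q) = 0"
    using mult_ann_comp_ad_eq_zero[OF dense I _ i] by (metis comp_apply)
qed

lemma lie_semiprime_central_eq_zero:
  assumes semiprime: "lie_semiprime scale br" and central: "br k = (\<lambda>v. 0)"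
  shows "k = 0"
proof (rule ccontr)
  assume "k \<noteq> 0"
  define Z where "Z = {x. br x = (\<lambda>v. 0)}"
  have "lie_ideal scale br UNIV Z"
    by (simp add: Z_def lie_ideal_def submodule_def fun_eq_iff br_add_left br_scale_left)
  moreover have "Z \<noteq> {0}"
    using central \<open>k \<noteq> 0\<close> by (auto simp: Z_def)
  ultimately show False
    using semiprime by (auto simp: lie_semiprime_def Z_def)
qed

lemma br_annihilator_normalizer:
  assumes c: "\<forall>i\<in>I. br c i = 0" and x: "\<forall>i\<in>I. br i x \<in> I" and i: "i \<in> I"
  shows "br (br c x) i = 0"
proof -
  have "br c (br x i) = 0"
    using c x i by (simp add: br_antisym[of x i] br_minus_right)
  moreover have "br x (br i c) = 0"
    using c i br_antisym[of i c] by simp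
  ultimately have "br i (br c x) = 0"
    using jacobi[of c x i] by simp
  then show ?thesis
    using br_antisym[of "br c x" i] by simp
qed

lemma lie_ideal_Ann:
  assumes L: "lie_subalgebra scale br L" and I: "lie_ideal scale br L I"
  shows "lie_ideal scale br L (Ann br L I)"
proof -
  have "submodule scale (Ann br L I)"
    using L by (auto simp: submodule_def lie_subalgebra_def Ann_def br_add_left br_scale_left)
  moreover have "br (br a x) i = 0" if "a \<in> Ann br L I" "x \<in> L" "i \<in> I" for a x i
    using that I br_annihilator_normalizer[of I a x i]
    by (auto simp: Ann_def lie_ideal_def)
  ultimately show ?thesis
    using L by (auto simp: lie_ideal_def lie_subalgebra_def Ann_def)
qed

lemma Ann_essential_ideal_eq_zero:
  assumes semiprime: "mult_semiprime scale br"
    and L: "lie_subalgebra scale br L" and dense: "dense_ext scale br L"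
    and I: "essential_ideal scale br L I"
  shows "Ann br L I = {0}"
proof -
  have ideal: "lie_ideal scale br L I"
    using I by (simp add: essential_ideal_def)
  have "k = 0" if "k \<in> I" "k \<in> Ann br L I" for k
  proof -
    have "br k \<circ> id = (\<lambda>v. 0)"
      using semiprime dense ideal that mult_alg.id_in
      by (intro ad_comp_eq_zero_if_vanishes_on_ideal) (auto simp: mult_semiprime_def Ann_def)
    then show "k = 0"
      using semiprime lie_semiprime_central_eq_zero by (simp add: mult_semiprime_def)
  qed
  moreover have "0 \<in> I"
    using ideal by (simp add: lie_ideal_def submodule_def)
  moreover have "0 \<in> Ann br L I"
    using L by (simp add: Ann_def lie_subalgebra_def submodule_def)
  ultimately have "I \<inter> Ann br L I = {0}"
    by blast
  then show ?thesis
    using I lie_ideal_Ann[OF L ideal] unfolding essential_ideal_def by blast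
qed

lemma Ann_UNIV_eq_zero_if_quotients:
  assumes quotients: "algebra_of_quotients scale br L"
    and I: "lie_ideal scale br L I" and ann: "Ann br L I = {0}"
  shows "Ann br UNIV I = {0}"
proof -
  have "c = 0" if c: "\<forall>i\<in>I. br c i = 0" for c
  proof (rule ccontr)
    assume "c \<noteq> 0"
    then obtain J j where J: "lie_ideal scale br L J" and j: "j \<in> J"
      and jc: "br j c \<in> L" "br j c \<noteq> 0"
      using quotients unfolding algebra_of_quotients_def by blast
    have "\<forall>i\<in>I. br i j \<in> I"
      using I J j by (auto simp: lie_ideal_def)
    then have "br (br c j) i = 0" if "i \<in> I" for i
      using br_annihilator_normalizer[OF c _ that] by blast
    then have "br j c \<in> Ann br L I"
      using jc br_antisym[of j c] by (simp add: Ann_def br_minus_left)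
    with ann jc show False
      by blast
  qed
  then show ?thesis
    by (auto simp: Ann_def)
qed

end

theorem mainTheorem16:
  fixes scale :: "'r::comm_ring_1 \<Rightarrow> 'q::ab_group_add \<Rightarrow> 'q"
    and br :: "'q \<Rightarrow> 'q \<Rightarrow> 'q"
    and L I :: "'q set"
  assumes "lie_algebra scale br"
    and "lie_subalgebra scale br L"
    and "dense_ext scale br L"
    and "mult_semiprime scale br"
    and "algebra_of_quotients scale br L"
    and "essential_ideal scale br L I"
  shows "dense_ext scale br I"
proof -
  interpret lie_alg scale br
    by (rule lie_alg.intro) (fact assms(1))
  have ideal: "lie_ideal scale br L I"
    using assms(6) by (simp add: essential_ideal_def)
  have ann: "Ann br UNIV I = {0}"
    using Ann_UNIV_eq_zero_if_quotients[OF assms(5) ideal]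
      Ann_essential_ideal_eq_zero[OF assms(4,2,3,6)] by simp
  show ?thesis
    unfolding dense_ext_def
  proof (intro ballI impI ext)
    fix \<mu> q
    assume \<mu>: "\<mu> \<in> mult_alg scale br" and vanish: "\<forall>s\<in>I. \<mu> s = 0"
    have "br i \<circ> \<mu> = (\<lambda>v. 0)" if "i \<in> I" for i
      using assms(4,3) ideal that \<mu> vanish
      by (intro ad_comp_eq_zero_if_vanishes_on_ideal) (auto simp: mult_semiprime_def)
    then have "\<mu> q \<in> Ann br UNIV I"
      by (auto simp: Ann_def br_antisym[of "\<mu> q"] fun_eq_iff)
    with ann show "\<mu> q = 0"
      by blast
  qed
qed

end
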